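(* Let $R_0,r,V_T>0$ and define, for $t\ge 0$ and $V_s>0$, $$f(t,V_s)=1+\frac{1}{2R_0(R_0+r)}\left(r^2-V_T^2\left(\frac{2\pi R_0}{V_s}+t\right)^2\right)-\cos\!\left(\frac{V_s t}{R_0}\right).$$ Let $\Omega=\{(t,V_s): V_s>0,\ 0\le t\le \frac{\pi R_0}{2V_s}\}$. Then $\frac{\partial f}{\partial V_s}(t,V_s)>0$ for all $(t,V_s)\in\Omega$. Consequently $f$, as a function of the two variables $(t,V_s)$, has no critical (in particular no minimum) points in the interior of $\Omega$, and $f$ is monotonically increasing in $V_s$ on $\Omega$: for each fixed $t\ge 0$, $V_s\mapsto f(t,V_s)$ is increasing on $\{V_s>0: t\le \pi R_0/(2V_s)\}$.
   Context: Here $R_0$ is the initial radius of the disk containing the evaders, $2r$ is the length of the sweeper's line sensor, $V_T$ is the maximal evader speed, and $V_s$ is the sweeper's speed. The times of interest are $0\le t\le \pi R_0/(2V_s)$, i.e. up to a quarter revolution of the sweeper around the disk. *)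

theory Defs
  imports "HOL-Analysis.Analysis"
begin

definition sweep_f :: "real \<Rightarrow> real \<Rightarrow> real \<Rightarrow> real \<Rightarrow> real \<Rightarrow> real" where
  "sweep_f R0 r VT t Vs =
     1 + (1 / (2 * R0 * (R0 + r))) * (r^2 - VT^2 * (2 * pi * R0 / Vs + t)^2)
       - cos (Vs * t / R0)"

definition sweep_Omega :: "real \<Rightarrow> (real \<times> real) set" where
  "sweep_Omega R0 = {(t, Vs). Vs > 0 \<and> 0 \<le> t \<and> t \<le> pi * R0 / (2 * Vs)}"

end

theory Submission
  imports Defs
begin

text \<open>On \<open>\<Omega>\<close> the \<open>V\<^sub>s\<close>-derivative of \<open>f\<close> is the sum of a strictly positive term coming
  from the evader disk, \<open>V\<^sub>T\<^sup>2 (2\<pi>R\<^sub>0/V\<^sub>s + t) 2\<pi>R\<^sub>0 / (R\<^sub>0 (R\<^sub>0 + r) V\<^sub>s\<^sup>2)\<close>, and the term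
  \<open>sin (V\<^sub>s t/R\<^sub>0) t/R\<^sub>0\<close>, which is nonnegative because \<open>t \<le> \<pi>R\<^sub>0/(2V\<^sub>s)\<close> keeps the angle in
  \<open>[0, \<pi>/2]\<close>. A vanishing total derivative would make this partial derivative vanish, and
  since the admissible speeds for fixed \<open>t\<close> form an interval, the mean value theorem gives
  strict monotonicity in \<open>V\<^sub>s\<close>.\<close>

definition sweep_f_deriv :: "real \<Rightarrow> real \<Rightarrow> real \<Rightarrow> real \<Rightarrow> real \<Rightarrow> real" where
  "sweep_f_deriv R0 r VT t Vs =
     (1 / (2 * R0 * (R0 + r))) * (VT^2 * (2 * (2 * pi * R0 / Vs + t) * (2 * pi * R0 / Vs^2)))
       + sin (Vs * t / R0) * (t / R0)"

lemma sweep_f_has_real_derivative: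
  assumes "R0 \<noteq> 0" "Vs \<noteq> 0"
  shows "(sweep_f R0 r VT t has_real_derivative sweep_f_deriv R0 r VT t Vs) (at Vs)"
proof -
  \<comment> \<open>Opaque constants keep \<open>algebra_simps\<close> from expanding the coefficients.\<close>
  define c where "c = 1 / (2 * R0 * (R0 + r))"
  define a where "a = 2 * pi * R0"
  have "((\<lambda>v. 1 + c * (r^2 - VT^2 * (a / v + t)^2) - cos (v * t / R0)) has_real_derivative
      c * (VT^2 * (2 * (a / Vs + t) * (a / Vs^2))) + sin (Vs * t / R0) * (t / R0)) (at Vs)"
    using assms by (auto intro!: derivative_eq_intros simp: power2_eq_square algebra_simps)
  then show ?thesis
    by (simp add: sweep_f_def [abs_def] sweep_f_deriv_def c_def a_def)
qed

lemma sweep_f_deriv_pos: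
  assumes "R0 > 0" "R0 + r > 0" "VT \<noteq> 0" "Vs > 0" "0 \<le> t" "t \<le> pi * R0 / (2 * Vs)"
  shows "sweep_f_deriv R0 r VT t Vs > 0"
proof -
  have evader_term_pos:
    "(1 / (2 * R0 * (R0 + r))) * (VT^2 * (2 * (2 * pi * R0 / Vs + t) * (2 * pi * R0 / Vs^2))) > 0"
    using assms by (intro mult_pos_pos) (auto intro!: add_pos_nonneg)
  have "0 \<le> Vs * t / R0" "Vs * t / R0 \<le> pi / 2"
    using assms by (simp_all add: field_simps)
  then have "sin (Vs * t / R0) \<ge> 0"
    by (intro sin_ge_zero) (use pi_gt_zero in linarith)+
  then have "sin (Vs * t / R0) * (t / R0) \<ge> 0"
    using assms by simp
  with evader_term_pos show ?thesis
    unfolding sweep_f_deriv_def by linarith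
qed

lemma has_derivative_zero_imp_partial_deriv_zero:
  fixes g :: "'a::real_normed_vector \<Rightarrow> 'b::real_normed_vector \<Rightarrow> 'c::real_normed_vector"
  assumes "((\<lambda>q. g (fst q) (snd q)) has_derivative (\<lambda>h. 0)) (at (x, y))"
  shows "(g x has_derivative (\<lambda>h. 0)) (at y)"
proof -
  have "((\<lambda>v. (x, v)) has_derivative (\<lambda>h. (0, h))) (at y)"
    by (auto intro!: derivative_eq_intros)
  from diff_chain_at[OF this assms] show ?thesis
    by (simp add: o_def)
qed

lemma sweep_admissible_speed_le:
  assumes "R0 > 0" "0 < z" "z \<le> Vs" "t \<le> pi * R0 / (2 * Vs)"
  shows "t \<le> pi * R0 / (2 * z)"
proof -
  have "pi * R0 / (2 * Vs) \<le> pi * R0 / (2 * z)"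
    using assms by (intro divide_left_mono) auto
  with assms(4) show ?thesis by linarith
qed

lemma sweep_f_deriv_on_Omega:
  assumes "R0 > 0" "R0 + r > 0" "VT \<noteq> 0" "(t, Vs) \<in> sweep_Omega R0"
  shows "(sweep_f R0 r VT t has_real_derivative sweep_f_deriv R0 r VT t Vs) (at Vs)"
    and "sweep_f_deriv R0 r VT t Vs > 0"
  using assms sweep_f_has_real_derivative[of R0] sweep_f_deriv_pos[of R0 r VT]
  by (auto simp: sweep_Omega_def)

lemma strict_mono_on_sweep_f:
  assumes "R0 > 0" "R0 + r > 0" "VT \<noteq> 0" "t \<ge> 0"
  shows "strict_mono_on {Vs. Vs > 0 \<and> t \<le> pi * R0 / (2 * Vs)} (sweep_f R0 r VT t)"
proof (rule strict_mono_onI, rule DERIV_pos_imp_increasing, assumption)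
  fix x y z assume "x \<in> {Vs. Vs > 0 \<and> t \<le> pi * R0 / (2 * Vs)}"
    "y \<in> {Vs. Vs > 0 \<and> t \<le> pi * R0 / (2 * Vs)}" "x \<le> z" "z \<le> y"
  with sweep_admissible_speed_le[OF assms(1)] assms(4) have "(t, z) \<in> sweep_Omega R0"
    by (auto simp: sweep_Omega_def)
  with sweep_f_deriv_on_Omega[OF assms(1-3)]
  show "\<exists>y. (sweep_f R0 r VT t has_real_derivative y) (at z) \<and> 0 < y"
    by blast
qed

theorem theorem3:
  fixes R0 r VT :: real
  assumes "R0 > 0" and "r > 0" and "VT > 0"
  shows "(\<forall>(t, Vs) \<in> sweep_Omega R0.
            (\<lambda>v. sweep_f R0 r VT t v) differentiable (at Vs) \<and>
            deriv (\<lambda>v. sweep_f R0 r VT t v) Vs > 0)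
       \<and> (\<forall>p \<in> interior (sweep_Omega R0).
            \<not> ((\<lambda>q. sweep_f R0 r VT (fst q) (snd q)) has_derivative (\<lambda>h. 0)) (at p))
       \<and> (\<forall>t \<ge> 0. strict_mono_on {Vs. Vs > 0 \<and> t \<le> pi * R0 / (2 * Vs)}
                    (\<lambda>v. sweep_f R0 r VT t v))"
proof -
  have params: "R0 > 0" "R0 + r > 0" "VT \<noteq> 0"
    using assms by auto
  note partial_pos = sweep_f_deriv_on_Omega[OF params]
  have no_critical_point: False
    if "(t, Vs) \<in> interior (sweep_Omega R0)"
      and "((\<lambda>q. sweep_f R0 r VT (fst q) (snd q)) has_derivative (\<lambda>h. 0)) (at (t, Vs))" for t Vs
  proof -
    from has_derivative_zero_imp_partial_deriv_zero[OF that(2)]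
    have "(sweep_f R0 r VT t has_real_derivative 0) (at Vs)"
      by (simp add: has_field_derivative_def lambda_zero)
    with partial_pos that(1) interior_subset show False
      by (metis DERIV_unique less_irrefl subsetD)
  qed
  with partial_pos strict_mono_on_sweep_f[OF params] show ?thesis
    by (fastforce simp: DERIV_imp_deriv real_differentiable_def)
qed

end
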